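(* The following identities hold in $Y[[u^{-1}]]$: (1) $t_{1,1}(u-1)t_{1,2}(u)=t_{1,2}(u-1)t_{1,1}(u)$; (2) $t_{1,1}(u)t_{2,1}(u-1)=t_{2,1}(u)t_{1,1}(u-1)$; (3) $t_{1,2}(u-1)t_{1,2}(u)=0$; (4) $(k+1)t_{2,1}(u)t_{1,1}(u-k)=k\,t_{1,1}(u-k)t_{2,1}(u)+t_{2,1}(u-k)t_{1,1}(u)$ for every $k\in\mathbb{Z}_{\ge0}$.
   Context: Let $k$ be an algebraically closed field of characteristic $p>2$ (the integer $k$ in (4) is a separate variable). Fix parities $|1|=0$, $|2|=1$. The super Yangian $Y=Y_{1|1}$ is the associative superalgebra over $k$ generated by $t_{i,j}^{(r)}$ ($1\le i,j\le2$, $r>0$) of parity $|i|+|j|\pmod2$, with relations $[t_{i,j}^{(r)},t_{k,l}^{(s)}]=(-1)^{|i||j|+|i||k|+|j||k|}\sum_{t=0}^{\min(r,s)-1}(t_{k,j}^{(t)}t_{i,l}^{(r+s-1-t)}-t_{k,j}^{(r+s-1-t)}t_{i,l}^{(t)})$ (supercommutator), $t_{i,j}^{(0)}=\delta_{ij}$. Put $t_{i,j}(u)=\sum_{r\ge0}t_{i,j}^{(r)}u^{-r}$; shifted series $t_{i,j}(u-c)$ are expanded in $u^{-1}$. *)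

theory Defs
  imports "HOL-Computational_Algebra.Computational_Algebra"
begin

definition par :: "nat \<Rightarrow> nat" where
  "par i = (if i = 2 then 1 else 0)"

(* t_{i,j}^{(r)} with the convention t_{i,j}^{(0)} = delta_{ij};
   g i j r is the generator for r > 0 *)
definition T :: "(nat \<Rightarrow> nat \<Rightarrow> nat \<Rightarrow> 'a::ring_1) \<Rightarrow> nat \<Rightarrow> nat \<Rightarrow> nat \<Rightarrow> 'a" where
  "T g i j r = (if r = 0 then (if i = j then 1 else 0) else g i j r)"

(* the defining relations of Y_{1|1} (supercommutator written out) *)
definition yangian_rels :: "(nat \<Rightarrow> nat \<Rightarrow> nat \<Rightarrow> 'a::ring_1) \<Rightarrow> bool" where
  "yangian_rels g \<longleftrightarrow>
     (\<forall>i\<in>{1,2}. \<forall>j\<in>{1,2}. \<forall>k\<in>{1,2}. \<forall>l\<in>{1,2}. \<forall>r>0. \<forall>s>0.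
        T g i j r * T g k l s
          - (-1) ^ ((par i + par j) * (par k + par l)) * T g k l s * T g i j r
        = (-1) ^ (par i * par j + par i * par k + par j * par k) *
          (\<Sum>t = 0..<min r s. T g k j t * T g i l (r + s - 1 - t)
                               - T g k j (r + s - 1 - t) * T g i l t))"

(* the series f(u - c) = sum_r f r (u - c)^(-r), expanded in the variable X = u^(-1):
   (u-c)^(-r) = sum_m binom(r+m-1, m) c^m u^(-r-m) for r >= 1 *)
definition shser :: "(nat \<Rightarrow> 'a::ring_1) \<Rightarrow> int \<Rightarrow> 'a fps" where
  "shser f c = Abs_fps (\<lambda>n. if n = 0 then f 0
      else (\<Sum>r = 1..n. of_int (c ^ (n - r)) * of_nat ((n - 1) choose (n - r)) * f r))"

definition tser :: "(nat \<Rightarrow> nat \<Rightarrow> nat \<Rightarrow> 'a::ring_1) \<Rightarrow> nat \<Rightarrow> nat \<Rightarrow> int \<Rightarrow> 'a fps" where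
  "tser g i j c = shser (T g i j) c"

end

theory Submission
  imports Defs
begin

(* All four identities are specialisations of the series form of the defining relations,
     (d - c) [t_ij(u - c), t_kl(u - d)] = +-(t_kj(u - c) t_il(u - d) - t_kj(u - d) t_il(u - c)),
   [_, _] being the supercommutator. With G_c = (u - c)^(-1), a series in u^(-1) with integer,
   hence central, coefficients, one has t(u - c) = sum_r t^(r) G_c^r and the resolvent identity
   (d - c) G_c G_d = G_d - G_c. Multiplying the double series
   sum_(r,s) [t_ij^(r), t_kl^(s)] G_c^r G_d^s by d - c and applying the resolvent identity
   telescopes it against the defining relations in the form
     [t_ij^(r+1), t_kl^(s)] - [t_ij^(r), t_kl^(s+1)] = +-(t_kj^(r) t_il^(s) - t_kj^(s) t_il^(r)).
   The infinite sums are replaced by truncations, which agree with the series below degree N.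
   For (3) the relation reads 2 t_12(u-1) t_12(u) = 0, and 2 is invertible as p > 2. *)

definition of_int_fps :: "int fps \<Rightarrow> 'a::ring_1 fps" where
  "of_int_fps f = Abs_fps (\<lambda>n. of_int (f $ n))"

lemma of_int_fps_nth [simp]: "of_int_fps f $ n = of_int (f $ n)"
  by (simp add: of_int_fps_def)

lemma of_int_fps_diff: "of_int_fps (f - g) = of_int_fps f - of_int_fps g"
  by (rule fps_ext) simp

lemma of_int_fps_mult: "of_int_fps (f * g) = of_int_fps f * of_int_fps g"
  by (rule fps_ext) (simp add: fps_mult_nth)

lemma of_int_fps_const_mult: "of_int_fps (fps_const k * f) = of_int k * of_int_fps f"
  by (simp add: fps_eq_iff flip: fps_of_int)

lemma of_int_fps_commute: "of_int_fps f * g = g * of_int_fps f"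
proof (rule fps_ext)
  fix n
  have "(of_int_fps f * g) $ n = (\<Sum>i=0..n. g $ (n - i) * of_int (f $ i))"
    by (simp add: fps_mult_nth mult_of_int_commute)
  also have "\<dots> = (\<Sum>i=0..n. g $ i * of_int (f $ (n - i)))"
    by (rule sum.reindex_bij_witness[where i="\<lambda>i. n - i" and j="\<lambda>i. n - i"]) auto
  finally show "(of_int_fps f * g) $ n = (g * of_int_fps f) $ n"
    by (simp add: fps_mult_nth)
qed

(* (u - c)^(-1) = X / (1 - c X) in the variable X = u^(-1) *)
definition geom_fps :: "int \<Rightarrow> int fps" where
  "geom_fps c = fps_X * Abs_fps (\<lambda>n. c ^ n)"

lemma one_minus_X_mult_geometric_series:
  "(1 - fps_const (c::int) * fps_X) * Abs_fps (\<lambda>n. c ^ n) = 1"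
proof (rule fps_ext)
  fix n
  have "(1 - fps_const c * fps_X) * Abs_fps (\<lambda>n. c ^ n)
      = Abs_fps (\<lambda>n. c ^ n) - fps_const c * (fps_X * Abs_fps (\<lambda>n. c ^ n))"
    by algebra
  then show "((1 - fps_const c * fps_X) * Abs_fps (\<lambda>n. c ^ n)) $ n = 1 $ n"
    by (cases n) simp_all
qed

lemma geom_fps_resolvent: "fps_const (d - c) * (geom_fps c * geom_fps d) = geom_fps d - geom_fps c"
proof -
  let ?Ec = "Abs_fps (\<lambda>n. c ^ n)" and ?Ed = "Abs_fps (\<lambda>n. d ^ n)"
  let ?F = "(1 - fps_const c * fps_X) * (1 - fps_const d * fps_X)"
  have Ec: "(1 - fps_const c * fps_X) * ?Ec = 1" and Ed: "(1 - fps_const d * fps_X) * ?Ed = 1"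
    by (fact one_minus_X_mult_geometric_series)+
  have F: "?F \<noteq> 0"
    by (metis Ec Ed mult_eq_0_iff zero_neq_one)
  have L: "?F * (fps_const (d - c) * (geom_fps c * geom_fps d)) = fps_const (d - c) * fps_X ^ 2"
  proof -
    have "?F * (fps_const (d - c) * (geom_fps c * geom_fps d))
        = fps_const (d - c) * fps_X ^ 2 *
            ((1 - fps_const c * fps_X) * ?Ec) * ((1 - fps_const d * fps_X) * ?Ed)"
      unfolding geom_fps_def by algebra
    then show ?thesis by (simp add: Ec Ed)
  qed
  have R: "?F * (geom_fps d - geom_fps c) = fps_const (d - c) * fps_X ^ 2"
  proof -
    have "?F * (geom_fps d - geom_fps c)
        = (1 - fps_const c * fps_X) * fps_X * ((1 - fps_const d * fps_X) * ?Ed)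
          - (1 - fps_const d * fps_X) * fps_X * ((1 - fps_const c * fps_X) * ?Ec)"
      unfolding geom_fps_def by algebra
    then show ?thesis unfolding Ec Ed fps_const_sub[symmetric] by algebra
  qed
  show ?thesis
    using mult_left_cancel[OF F] L R by metis
qed

lemma geom_series_power_nth:
  "(Abs_fps (\<lambda>n. c ^ n) ^ Suc r) $ m = (c::int) ^ m * int ((r + m) choose m)"
proof (induction r arbitrary: m)
  case 0
  then show ?case by simp
next
  case (Suc r)
  have "(Abs_fps (\<lambda>n. c ^ n) ^ Suc (Suc r)) $ m
      = (\<Sum>i=0..m. c ^ i * (c ^ (m - i) * int ((r + (m - i)) choose (m - i))))"
    unfolding power_Suc[of _ "Suc r"] fps_mult_nth Suc.IH by simp
  also have "\<dots> = c ^ m * (\<Sum>i=0..m. int ((r + (m - i)) choose (m - i)))"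
    by (simp add: sum_distrib_left mult.assoc[symmetric] power_add[symmetric])
  also have "(\<Sum>i=0..m. int ((r + (m - i)) choose (m - i)))
      = (\<Sum>k\<le>m. int ((r + k) choose k))"
    by (rule sum.reindex_bij_witness[where i="\<lambda>i. m - i" and j="\<lambda>i. m - i"]) auto
  also have "\<dots> = int ((Suc r + m) choose m)"
    by (simp flip: of_nat_sum add: sum_choose_lower)
  finally show ?case .
qed

lemma geom_fps_power_nth:
  assumes "0 < r" "r \<le> n"
  shows "(geom_fps c ^ r) $ n = c ^ (n - r) * int ((n - 1) choose (n - r))"
proof -
  obtain r' where r: "r = Suc r'" using assms(1) by (cases r) auto
  have "geom_fps c ^ r = fps_X ^ r * Abs_fps (\<lambda>n. c ^ n) ^ Suc r'"
    by (simp add: geom_fps_def power_mult_distrib r del: power_Suc)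
  moreover have "r' + (n - r) = n - 1" using assms r by simp
  ultimately show ?thesis
    using assms by (simp add: fps_X_power_mult_nth geom_series_power_nth del: power_Suc)
qed

lemma geom_fps_powers_mult_nth_below:
  assumes "n < r + s"
  shows "(geom_fps c ^ r * geom_fps d ^ s) $ n = 0"
proof -
  have "geom_fps c ^ r * geom_fps d ^ s
      = fps_X ^ (r + s) * (Abs_fps (\<lambda>n. c ^ n) ^ r * Abs_fps (\<lambda>n. d ^ n) ^ s)"
    by (simp add: geom_fps_def power_mult_distrib power_add algebra_simps)
  then show ?thesis using assms by (simp add: fps_X_power_mult_nth)
qed

lemma geom_fps_power_nth_below: "n < r \<Longrightarrow> (geom_fps c ^ r) $ n = 0"
  using geom_fps_powers_mult_nth_below[of n r 0 c c] by simp

lemma geom_fps_powers_resolvent: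
  "fps_const (d - c) * (geom_fps c ^ Suc r * geom_fps d ^ Suc s)
     = geom_fps c ^ r * geom_fps d ^ Suc s - geom_fps c ^ Suc r * geom_fps d ^ s"
proof -
  have "fps_const (d - c) * (geom_fps c ^ Suc r * geom_fps d ^ Suc s)
      = geom_fps c ^ r * geom_fps d ^ s * (fps_const (d - c) * (geom_fps c * geom_fps d))"
    by (simp add: algebra_simps del: fps_const_sub)
  also have "\<dots> = geom_fps c ^ r * geom_fps d ^ s * (geom_fps d - geom_fps c)"
    by (simp only: geom_fps_resolvent)
  finally show ?thesis by (simp add: algebra_simps)
qed

lemma fps_cutoff_mult: "fps_cutoff n (f * g) = fps_cutoff n (fps_cutoff n f * fps_cutoff n g)"
  by (simp add: fps_eq_iff fps_cutoff_left_mult_nth fps_cutoff_right_mult_nth)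

lemma fps_cutoff_of_int_mult:
  "fps_cutoff n (of_int k * f) = of_int k * fps_cutoff n (f :: 'a::ring_1 fps)"
  by (simp add: fps_eq_iff flip: fps_of_int)

definition geom_expansion :: "(nat \<Rightarrow> 'a::ring_1) \<Rightarrow> int \<Rightarrow> nat \<Rightarrow> 'a fps" where
  "geom_expansion A c N = (\<Sum>r<N. fps_const (A r) * of_int_fps (geom_fps c ^ r))"

lemma fps_cutoff_shser: "fps_cutoff N (shser A c) = fps_cutoff N (geom_expansion A c N)"
proof (rule fps_ext)
  fix n
  have "geom_expansion A c N $ n = shser A c $ n" if "n < N"
  proof (cases "n = 0")
    case True
    have "geom_expansion A c N $ 0 = (\<Sum>r<N. A r * of_int ((geom_fps c ^ r) $ 0))"
      by (simp add: geom_expansion_def fps_sum_nth)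
    also have "\<dots> = (\<Sum>r\<in>{0}. A r * of_int ((geom_fps c ^ r) $ 0))"
      using \<open>n < N\<close>
      by (intro sum.mono_neutral_right) (auto simp: geom_fps_power_nth_below)
    finally show ?thesis using True by (simp add: shser_def)
  next
    case False
    have "geom_expansion A c N $ n = (\<Sum>r<N. A r * of_int ((geom_fps c ^ r) $ n))"
      by (simp add: geom_expansion_def fps_sum_nth)
    also have "\<dots> = (\<Sum>r=1..n. A r * of_int ((geom_fps c ^ r) $ n))"
      using \<open>n < N\<close> False
      by (intro sum.mono_neutral_right) (auto simp: geom_fps_power_nth_below not_less_eq_eq)
    also have "\<dots> = (\<Sum>r=1..n. of_int ((geom_fps c ^ r) $ n) * A r)"
      by (simp only: mult_of_int_commute)
    also have "\<dots> = shser A c $ n"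
      using False by (simp add: shser_def geom_fps_power_nth)
    finally show ?thesis .
  qed
  then show "fps_cutoff N (shser A c) $ n = fps_cutoff N (geom_expansion A c N) $ n"
    by simp
qed

lemma fps_cutoff_shser_mult:
  "fps_cutoff N (shser A c * shser B d)
     = fps_cutoff N (geom_expansion A c N * geom_expansion B d N)"
  by (metis fps_cutoff_mult fps_cutoff_shser)

definition geom_double_sum ::
    "int \<Rightarrow> int \<Rightarrow> nat \<Rightarrow> (nat \<Rightarrow> nat \<Rightarrow> 'a::ring_1) \<Rightarrow> 'a fps" where
  "geom_double_sum c d N F =
     (\<Sum>r<N. \<Sum>s<N. fps_const (F r s) * of_int_fps (geom_fps c ^ r * geom_fps d ^ s))"

lemma const_of_int_fps_mult:
  "fps_const a * of_int_fps P * (fps_const b * of_int_fps Q)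
     = fps_const (a * b) * of_int_fps (P * Q)"
proof -
  have "fps_const a * of_int_fps P * (fps_const b * of_int_fps Q)
      = fps_const a * (fps_const b * of_int_fps P) * of_int_fps Q"
    by (simp only: mult.assoc of_int_fps_commute[of P])
  then show ?thesis by (simp add: of_int_fps_mult mult.assoc flip: fps_const_mult)
qed

lemma geom_expansion_mult:
  "geom_expansion A c N * geom_expansion B d N = geom_double_sum c d N (\<lambda>r s. A r * B s)"
  unfolding geom_expansion_def geom_double_sum_def sum_distrib_left sum_distrib_right
  by (simp only: const_of_int_fps_mult) (rule sum.swap)

lemma geom_double_sum_swap:
  "geom_double_sum d c N F = geom_double_sum c d N (\<lambda>r s. F s r)"
  unfolding geom_double_sum_def by (subst sum.swap) (simp only: mult.commute[of "geom_fps d ^ _"])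

lemma geom_double_sum_diff:
  "geom_double_sum c d N F - geom_double_sum c d N G
     = geom_double_sum c d N (\<lambda>r s. F r s - G r s)"
  unfolding geom_double_sum_def
  by (simp only: sum_subtractf[symmetric] left_diff_distrib[symmetric] fps_const_sub)

lemma geom_double_sum_of_int_mult:
  "of_int e * geom_double_sum c d N F = geom_double_sum c d N (\<lambda>r s. of_int e * F r s)"
  unfolding geom_double_sum_def sum_distrib_left
  by (simp only: mult.assoc[symmetric] fps_of_int[symmetric] fps_const_mult)

lemma geom_double_sum_resolvent:
  assumes "\<And>s. K 0 s = 0" and "\<And>r. K r 0 = 0"
  shows "of_int (d - c) * geom_double_sum c d (Suc M) K
    = (\<Sum>r<M. \<Sum>s<M. fps_const (K (Suc r) (Suc s)) *
         (of_int_fps (geom_fps c ^ r * geom_fps d ^ Suc s)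
          - of_int_fps (geom_fps c ^ Suc r * geom_fps d ^ s)))"
proof -
  have resolvent: "of_int (d - c) * of_int_fps (geom_fps c ^ Suc r * geom_fps d ^ Suc s)
      = of_int_fps (geom_fps c ^ r * geom_fps d ^ Suc s)
        - (of_int_fps (geom_fps c ^ Suc r * geom_fps d ^ s) :: 'a fps)"
    for r s
    by (simp only: of_int_fps_const_mult[symmetric] geom_fps_powers_resolvent of_int_fps_diff)
  have "of_int (d - c) * geom_double_sum c d (Suc M) K
      = (\<Sum>r<Suc M. \<Sum>s<Suc M. fps_const (K r s) *
           (of_int (d - c) * of_int_fps (geom_fps c ^ r * geom_fps d ^ s)))"
  proof -
    have "of_int (d - c) * (fps_const k * P) = fps_const k * (of_int (d - c) * P)"
      for k and P :: "'a fps"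
      by (metis mult.assoc mult_of_int_commute)
    then show ?thesis unfolding geom_double_sum_def sum_distrib_left by simp
  qed
  also have "\<dots> = (\<Sum>r<M. \<Sum>s<M. fps_const (K (Suc r) (Suc s)) *
           (of_int (d - c) * of_int_fps (geom_fps c ^ Suc r * geom_fps d ^ Suc s)))"
    by (simp add: sum.lessThan_Suc_shift assms del: sum.lessThan_Suc)
  finally show ?thesis by (simp only: resolvent)
qed

lemma fps_cutoff_geom_terms_above:
  assumes "\<And>i. i \<in> I \<Longrightarrow> n \<le> r i + s i"
  shows "fps_cutoff n
    (\<Sum>i\<in>I. fps_const (k i) * of_int_fps (geom_fps c ^ r i * geom_fps d ^ s i)) = 0"
proof -
  have "(geom_fps c ^ r i * geom_fps d ^ s i) $ m = 0" if "m < n" "i \<in> I" for m i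
    using assms[OF that(2)] that(1) by (simp add: geom_fps_powers_mult_nth_below)
  then show ?thesis by (simp add: fps_eq_iff fps_sum_nth)
qed

lemma geom_double_sum_telescope:
  assumes "\<And>s. K 0 s = 0" and "\<And>r. K r 0 = 0"
  shows "fps_cutoff N (of_int (d - c) * geom_double_sum c d N K)
    = fps_cutoff N (geom_double_sum c d N (\<lambda>r s. K (Suc r) s)
                    - geom_double_sum c d N (\<lambda>r s. K r (Suc s)))"
proof (cases N)
  case (Suc M)
  let ?P = "\<lambda>r s. of_int_fps (geom_fps c ^ r * geom_fps d ^ s) :: 'a fps"
  define S1 where "S1 = (\<Sum>r<M. \<Sum>s<M. fps_const (K (Suc r) (Suc s)) * ?P r (Suc s))"
  define S2 where "S2 = (\<Sum>r<M. \<Sum>s<M. fps_const (K (Suc r) (Suc s)) * ?P (Suc r) s)"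
  \<comment> \<open>the boundary terms \<open>r = M\<close> and \<open>s = M\<close>, of order \<open>> M\<close>\<close>
  define E1 where "E1 = (\<Sum>s<M. fps_const (K (Suc M) (Suc s)) * ?P M (Suc s))"
  define E2 where "E2 = (\<Sum>r<M. fps_const (K (Suc r) (Suc M)) * ?P (Suc r) M)"
  have "of_int (d - c) * geom_double_sum c d N K = S1 - S2"
    unfolding Suc geom_double_sum_resolvent[where K = K, OF assms] S1_def S2_def
    by (simp only: right_diff_distrib sum_subtractf)
  moreover have "geom_double_sum c d N (\<lambda>r s. K (Suc r) s) = S1 + E1"
  proof -
    have "geom_double_sum c d N (\<lambda>r s. K (Suc r) s)
        = (\<Sum>r<Suc M. \<Sum>s<M. fps_const (K (Suc r) (Suc s)) * ?P r (Suc s))"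
      unfolding Suc geom_double_sum_def
      by (rule sum.cong[OF refl])
        (simp add: sum.lessThan_Suc_shift assms del: sum.lessThan_Suc power_Suc)
    then show ?thesis unfolding S1_def E1_def by simp
  qed
  moreover have "geom_double_sum c d N (\<lambda>r s. K r (Suc s)) = S2 + E2"
  proof -
    have "geom_double_sum c d N (\<lambda>r s. K r (Suc s))
        = (\<Sum>r<M. \<Sum>s<Suc M. fps_const (K (Suc r) (Suc s)) * ?P (Suc r) s)"
      unfolding Suc geom_double_sum_def
      by (simp only: sum.lessThan_Suc_shift[where
            g = "\<lambda>r. \<Sum>s<Suc M. fps_const (K r (Suc s)) * ?P r s"])
        (simp add: assms)
    then show ?thesis unfolding S2_def E2_def by (simp add: sum.distrib)
  qed
  moreover have "fps_cutoff N E1 = 0" "fps_cutoff N E2 = 0"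
    unfolding Suc E1_def E2_def by (rule fps_cutoff_geom_terms_above; simp)+
  ultimately show ?thesis
    by (simp add: fps_cutoff_add fps_cutoff_diff)
qed simp

definition supercommutator :: "int \<Rightarrow> 'a::ring_1 \<Rightarrow> 'a \<Rightarrow> 'a" where
  "supercommutator e x y = x * y - of_int e * y * x"

lemma min_sum_recurrence:
  fixes K :: "nat \<Rightarrow> nat \<Rightarrow> 'a::ring_1"
  assumes "\<And>r s. K r s
    = x * (\<Sum>t<min r s. C t * D (r + s - 1 - t) - C (r + s - 1 - t) * D t)"
  shows "K (Suc r) s - K r (Suc s) = x * (C r * D s - C s * D r)"
proof -
  define f where "f t = C t * D (r + s - t) - C (r + s - t) * D t" for t
  have K1: "K (Suc r) s = x * (\<Sum>t<min (Suc r) s. f t)"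
    and K2: "K r (Suc s) = x * (\<Sum>t<min r (Suc s). f t)"
    by (simp_all add: assms f_def)
  consider "r < s" | "r = s" | "s < r" by linarith
  then show ?thesis
  proof cases
    case 1
    then have "min (Suc r) s = Suc r" "min r (Suc s) = r" by auto
    then show ?thesis unfolding K1 K2 by (simp add: f_def algebra_simps)
  next
    case 2
    then show ?thesis unfolding K1 K2 by simp
  next
    case 3
    then have "min (Suc r) s = s" "min r (Suc s) = Suc s" by auto
    then show ?thesis unfolding K1 K2 by (simp add: f_def algebra_simps)
  qed
qed

lemma shser_supercommutator:
  fixes A B C D :: "nat \<Rightarrow> 'a::ring_1"
  assumes rel: "\<And>r s. supercommutator e (A r) (B s)
      = of_int \<sigma> * (\<Sum>t<min r s. C t * D (r + s - 1 - t) - C (r + s - 1 - t) * D t)"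
  shows "of_int (d - c) * supercommutator e (shser A c) (shser B d)
    = of_int \<sigma> * (shser C c * shser D d - shser C d * shser D c)"
proof -
  define K where "K = (\<lambda>r s. supercommutator e (A r) (B s))"
  have K0: "K 0 s = 0" "K r 0 = 0" for r s
    by (simp_all add: K_def rel)
  have K_rec: "K (Suc r) s - K r (Suc s) = of_int \<sigma> * (C r * D s - C s * D r)" for r s
    by (rule min_sum_recurrence) (simp add: K_def rel)
  have "fps_cutoff N (of_int (d - c) * supercommutator e (shser A c) (shser B d))
      = fps_cutoff N (of_int \<sigma> * (shser C c * shser D d - shser C d * shser D c))" for N
  proof -
    have "fps_cutoff N (of_int (d - c) * supercommutator e (shser A c) (shser B d))
        = of_int (d - c) * fps_cutoff N (geom_expansion A c N * geom_expansion B d N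
            - of_int e * (geom_expansion B d N * geom_expansion A c N))"
      by (simp add: supercommutator_def fps_cutoff_of_int_mult fps_cutoff_diff
          fps_cutoff_shser_mult mult.assoc del: of_int_diff)
    also have "\<dots> = fps_cutoff N (of_int (d - c) * geom_double_sum c d N K)"
      by (simp add: fps_cutoff_of_int_mult geom_expansion_mult geom_double_sum_swap[of d c]
          geom_double_sum_of_int_mult[of e] geom_double_sum_diff K_def supercommutator_def
          mult.assoc del: of_int_diff)
    also have "\<dots>
        = fps_cutoff N (geom_double_sum c d N (\<lambda>r s. K (Suc r) s - K r (Suc s)))"
      by (simp add: geom_double_sum_telescope K0 geom_double_sum_diff del: of_int_diff)
    also have "\<dots> = fps_cutoff N (of_int \<sigma> *
        (geom_double_sum c d N (\<lambda>r s. C r * D s)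
         - geom_double_sum c d N (\<lambda>r s. C s * D r)))"
      by (simp add: K_rec geom_double_sum_of_int_mult[of \<sigma>] geom_double_sum_diff)
    also have "\<dots>
        = fps_cutoff N (of_int \<sigma> * (shser C c * shser D d - shser C d * shser D c))"
      by (simp add: fps_cutoff_of_int_mult fps_cutoff_diff fps_cutoff_shser_mult geom_expansion_mult
          geom_double_sum_swap[of d c])
    finally show ?thesis .
  qed
  then show ?thesis
    by (metis fps_ext fps_cutoff_eq_fps_cutoff_iff lessI)
qed

lemma yangian_rels_supercommutator:
  fixes g :: "nat \<Rightarrow> nat \<Rightarrow> nat \<Rightarrow> 'a::ring_1"
  assumes rels: "yangian_rels g"
    and idx: "i \<in> {1,2}" "j \<in> {1,2}" "k \<in> {1,2}" "l \<in> {1,2}"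
  shows "supercommutator ((-1) ^ ((par i + par j) * (par k + par l))) (T g i j r) (T g k l s)
    = of_int ((-1) ^ (par i * par j + par i * par k + par j * par k)) *
      (\<Sum>t<min r s. T g k j t * T g i l (r + s - 1 - t) - T g k j (r + s - 1 - t) * T g i l t)"
proof (cases "r = 0 \<or> s = 0")
  case True
  then show ?thesis
    using idx by (auto simp: supercommutator_def T_def par_def)
next
  case False
  then show ?thesis
    using rels[unfolded yangian_rels_def, rule_format, OF idx, of r s]
    by (simp add: supercommutator_def atLeast0LessThan)
qed

lemma tser_supercommutator:
  assumes "yangian_rels g" and "i \<in> {1,2}" "j \<in> {1,2}" "k \<in> {1,2}" "l \<in> {1,2}"
  shows "of_int (d - c) *
      supercommutator ((-1) ^ ((par i + par j) * (par k + par l))) (tser g i j c) (tser g k l d)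
    = of_int ((-1) ^ (par i * par j + par i * par k + par j * par k)) *
      (tser g k j c * tser g i l d - tser g k j d * tser g i l c)"
  unfolding tser_def by (rule shser_supercommutator) (rule yangian_rels_supercommutator[OF assms])

lemma tser_11_12_exchange:
  assumes "yangian_rels g"
  shows "tser g 1 1 1 * tser g 1 2 0 = tser g 1 2 1 * tser g 1 1 0"
  using tser_supercommutator[OF assms, where i = 1 and j = 1 and k = 1 and l = 2
      and c = 0 and d = 1]
  by (simp add: par_def supercommutator_def)

lemma tser_11_21_exchange:
  assumes "yangian_rels g"
  shows "tser g 1 1 0 * tser g 2 1 1 = tser g 2 1 0 * tser g 1 1 1"
  using tser_supercommutator[OF assms, where i = 1 and j = 1 and k = 2 and l = 1
      and c = 0 and d = 1]
  by (simp add: par_def supercommutator_def)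

lemma eq_zero_if_double_eq_zero:
  fixes h x :: "'a::ring_1"
  assumes "h + h = 1" and "x + x = 0"
  shows "x = 0"
proof -
  have "x = (h + h) * x" using assms(1) by simp
  also have "\<dots> = h * (x + x)" by (simp add: algebra_simps)
  finally show ?thesis using assms(2) by simp
qed

lemma tser_12_square_zero:
  assumes "yangian_rels g" and "h + h = (1::'a::ring_1)"
  shows "tser g 1 2 1 * tser g 1 2 0 = (0 :: 'a fps)"
proof (rule eq_zero_if_double_eq_zero)
  show "fps_const h + fps_const h = 1"
    using assms(2) by simp
  show "tser g 1 2 1 * tser g 1 2 0 + tser g 1 2 1 * tser g 1 2 0 = 0"
    using tser_supercommutator[OF assms(1), where i = 1 and j = 2 and k = 1 and l = 2
        and c = 1 and d = 0]
    by (simp add: par_def supercommutator_def algebra_simps) (metis add.right_inverse)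
qed

lemma tser_21_11_shift:
  assumes "yangian_rels g"
  shows "of_nat (k + 1) * (tser g 2 1 0 * tser g 1 1 (int k))
    = of_nat k * (tser g 1 1 (int k) * tser g 2 1 0) + tser g 2 1 (int k) * tser g 1 1 0"
  using tser_supercommutator[OF assms, where i = 1 and j = 1 and k = 2 and l = 1
      and c = "int k" and d = 0]
  by (simp add: par_def supercommutator_def algebra_simps)

lemma two_neq_zero_if_CHAR_gt_2: "CHAR('a::semiring_1) > 2 \<Longrightarrow> (2::'a) \<noteq> 0"
  by (metis of_nat_numeral of_nat_eq_0_iff_char_dvd dvd_imp_le zero_less_numeral not_le)

theorem lemmaA1:
  fixes \<iota> :: "'k::alg_closed_field \<Rightarrow> 'a::ring_1"
    and g :: "nat \<Rightarrow> nat \<Rightarrow> nat \<Rightarrow> 'a"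
  assumes char: "CHAR('k) > 2"
    and hom1: "\<iota> 1 = 1"
    and hom_add: "\<And>x y. \<iota> (x + y) = \<iota> x + \<iota> y"
    and hom_mult: "\<And>x y. \<iota> (x * y) = \<iota> x * \<iota> y"
    and central: "\<And>c a. \<iota> c * a = a * \<iota> c"
    and rels: "yangian_rels g"
  shows "tser g 1 1 1 * tser g 1 2 0 = tser g 1 2 1 * tser g 1 1 0
       \<and> tser g 1 1 0 * tser g 2 1 1 = tser g 2 1 0 * tser g 1 1 1
       \<and> tser g 1 2 1 * tser g 1 2 0 = 0
       \<and> (\<forall>k::nat. of_nat (k + 1) * (tser g 2 1 0 * tser g 1 1 (int k))
            = of_nat k * (tser g 1 1 (int k) * tser g 2 1 0) + tser g 2 1 (int k) * tser g 1 1 0)"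
proof -
  \<comment> \<open>of \<open>\<iota>\<close> only \<open>\<iota> 1 = 1\<close> and additivity are needed, to find a half in \<open>'a\<close>\<close>
  have "\<iota> (inverse 2) + \<iota> (inverse 2) = 1"
    using two_neq_zero_if_CHAR_gt_2[OF char] hom1
    by (simp flip: hom_add add: field_simps)
  then show ?thesis
    using rels tser_11_12_exchange tser_11_21_exchange tser_12_square_zero tser_21_11_shift by blast
qed
end
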